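(* For every $\epsilon>0$ there is a constant $C(\epsilon)>0$ such that $R_4(n)\le C(\epsilon)\, n^{1/2+\epsilon}$ for all positive integers $n$.
   Context: For a positive integer $n$, $R_4(n)$ denotes the number of ordered quadruples $(x,y,z,w)$ of positive integers with $n = xyzw + x + y + z + w$. *)

theory Defs
  imports Complex_Main
begin

definition R4 :: "nat \<Rightarrow> nat" where
  "R4 n = card {(x, y, z, w). (0::nat) < x \<and> 0 < y \<and> 0 < z \<and> 0 < w \<and> n = x * y * z * w + x + y + z + w}"

end

theory Submission
  imports Defs "HOL-Computational_Algebra.Primes"
begin

text \<open>
  Since \<open>xy \<cdot> zw \<le> n\<close>, one of the products \<open>xy\<close>, \<open>zw\<close> is at most \<open>sqrt n\<close>; by the symmetry
  \<open>(x, y, z, w) \<mapsto> (z, w, x, y)\<close> it suffices to count the solutions with \<open>(xy)\<^sup>2 \<le> n\<close>,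
  losing a factor 2. For fixed \<open>x, y\<close> the identity \<open>xy(n - x - y) + 1 = (xyz + 1)(xyw + 1)\<close>
  shows that \<open>z\<close> is determined by a divisor of a number below \<open>2n\<^sup>2\<close>, so there are
  \<open>O(n powr (2\<eta>))\<close> choices, while the pairs \<open>(x, y)\<close> with \<open>xy \<le> sqrt n\<close> number
  \<open>\<Sum>k \<le> sqrt n. d(k) = O(n powr (1/2 + \<eta>))\<close>. Both estimates rest on the divisor bound
  \<open>d(m) = O(m powr \<delta>)\<close>: in \<open>d(m) = \<Prod>\<^sub>p (a\<^sub>p + 1)\<close> a prime power \<open>p ^ a\<close> contributes
  \<open>a + 1 \<le> p powr (a\<delta>)\<close> once \<open>p \<ge> 2 powr (1/\<delta>)\<close>, and at most a constant times
  \<open>p powr (a\<delta>)\<close> otherwise. Taking \<open>\<eta> = \<epsilon>/3\<close> gives the claim.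
\<close>

definition divisor_count :: "nat \<Rightarrow> nat" where
  "divisor_count m = card {d. d dvd m}"

lemma divisor_count_mult_le:
  assumes "0 < m" "0 < k"
  shows "divisor_count (m * k) \<le> divisor_count m * divisor_count k"
proof -
  have "{d. d dvd m * k} \<subseteq> (\<lambda>(u, v). u * v) ` ({u. u dvd m} \<times> {v. v dvd k})"
  proof
    fix d assume "d \<in> {d. d dvd m * k}"
    then obtain u v where "d = u * v" "u dvd m" "v dvd k"
      using division_decomp by blast
    then show "d \<in> (\<lambda>(u, v). u * v) ` ({u. u dvd m} \<times> {v. v dvd k})" by force
  qed
  hence "divisor_count (m * k) \<le> card ((\<lambda>(u, v). u * v) ` ({u. u dvd m} \<times> {v. v dvd k}))"
    unfolding divisor_count_def using assms by (intro card_mono) auto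
  also have "\<dots> \<le> card ({u. u dvd m} \<times> {v. v dvd k})"
    by (rule card_image_le) (simp add: assms)
  finally show ?thesis
    by (simp add: divisor_count_def card_cartesian_product)
qed

lemma divisor_count_prime_power:
  assumes "prime p"
  shows "divisor_count (p ^ a) = a + 1"
proof -
  have "{d. d dvd p ^ a} = (\<lambda>i. p ^ i) ` {..a}"
    using divides_primepow_nat[OF assms] by auto
  moreover have "inj_on (\<lambda>i. p ^ i) {..a}"
    using prime_gt_1_nat[OF assms] by (auto intro: inj_onI)
  ultimately show ?thesis
    by (simp add: divisor_count_def card_image)
qed

lemma succ_le_powr_power:
  fixes \<delta> :: real
  assumes "\<delta> > 0" "2 \<le> p"
  shows "real (a + 1) \<le> (1 + 1 / (\<delta> * ln 2)) * (real p powr \<delta>) ^ a"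
proof -
  define c where "c = \<delta> * ln 2"
  have c: "c > 0" using assms(1) by (simp add: c_def)
  have "1 + a * c \<le> exp (a * c)" by (rule exp_ge_add_one_self)
  also have "exp (a * c) = 2 powr (\<delta> * a)" by (simp add: powr_def c_def mult_ac)
  also have "\<dots> \<le> real p powr (\<delta> * a)" using assms by (intro powr_mono2) auto
  also have "\<dots> = (real p powr \<delta>) ^ a"
    using assms(2) by (simp add: powr_realpow[symmetric] powr_powr)
  finally have "(1 + 1 / c) * (1 + a * c) \<le> (1 + 1 / c) * (real p powr \<delta>) ^ a"
    using c by (intro mult_left_mono) auto
  moreover have "(1 + 1 / c) * (1 + a * c) = real (a + 1) + a * c + 1 / c"
    using c by (simp add: field_simps)
  moreover have "0 \<le> a * c" "0 \<le> 1 / c" using c by auto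
  ultimately have "real (a + 1) \<le> (1 + 1 / c) * (real p powr \<delta>) ^ a" by linarith
  then show ?thesis unfolding c_def .
qed

lemma succ_le_powr_power_large:
  fixes \<delta> :: real
  assumes "\<delta> > 0" "1 \<le> \<delta> * N" "2 ^ N \<le> p"
  shows "real (a + 1) \<le> (real p powr \<delta>) ^ a"
proof -
  have "2 = 2 powr (1::real)" by simp
  also have "\<dots> \<le> 2 powr (\<delta> * N)" using assms(2) by (intro powr_mono) auto
  also have "\<dots> = real (2 ^ N) powr \<delta>" by (simp add: powr_realpow[symmetric] powr_powr mult_ac)
  also have "\<dots> \<le> real p powr \<delta>" using assms by (intro powr_mono2) (auto simp del: of_nat_power)
  finally have "(2::real) ^ a \<le> (real p powr \<delta>) ^ a" by (intro power_mono) auto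
  moreover have "real (a + 1) \<le> (2::real) ^ a" by (induction a) auto
  ultimately show ?thesis by linarith
qed

lemma split_prime_power_factor:
  fixes m :: nat
  assumes "1 < m"
  obtains p a r where "prime p" "0 < a" "\<not> p dvd r" "m = p ^ a * r"
proof -
  obtain p where p: "prime p" "p dvd m" using prime_factor_nat[of m] assms by auto
  then have "\<not> is_unit p" "m \<noteq> 0" using assms by auto
  then obtain r where "m = p ^ multiplicity p m * r" "\<not> p dvd r"
    using multiplicity_decompose'[of m p] by blast
  moreover have "0 < multiplicity p m"
    using p \<open>m \<noteq> 0\<close> by (simp add: prime_multiplicity_gt_zero_iff)
  ultimately show ?thesis using p(1) that by blast
qed

lemma divisor_count_prime_power_mult_le:
  assumes "prime p" "0 < r"
  shows "divisor_count (p ^ a * r) \<le> (a + 1) * divisor_count r"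
  using divisor_count_mult_le[of "p ^ a" r] assms
  by (simp add: divisor_count_prime_power prime_gt_0_nat)

lemma card_bounded_divisors_mono:
  fixes r m K :: nat
  assumes "r dvd m"
  shows "card {q. q < K \<and> q dvd r} \<le> card {q. q < K \<and> q dvd m}"
  using assms by (intro card_mono) (auto intro: dvd_trans)

lemma card_bounded_divisors_strict_mono:
  fixes r m K q :: nat
  assumes "r dvd m" "q < K" "q dvd m" "\<not> q dvd r"
  shows "card {q. q < K \<and> q dvd r} < card {q. q < K \<and> q dvd m}"
  using assms by (intro psubset_card_mono) (auto intro: dvd_trans)

text \<open>The exponent \<open>card {q. q < K \<and> q dvd m}\<close> generously counts the primes below \<open>K\<close> dividing
  \<open>m\<close>: each of them costs at most the factor \<open>B\<close>, larger primes cost nothing.\<close>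

lemma divisor_count_le_powr_small_divisors:
  fixes \<delta> B :: real and K :: nat
  assumes B: "1 \<le> B"
    and small: "\<And>p a. prime p \<Longrightarrow> real (a + 1) \<le> B * (real p powr \<delta>) ^ a"
    and large: "\<And>p a. prime p \<Longrightarrow> K \<le> p \<Longrightarrow> real (a + 1) \<le> (real p powr \<delta>) ^ a"
    and "0 < m"
  shows "real (divisor_count m) \<le> B ^ card {q. q < K \<and> q dvd m} * real m powr \<delta>"
  using \<open>0 < m\<close>
proof (induction m rule: less_induct)
  case (less m)
  define S where "S m = {q. q < K \<and> q dvd m}" for m
  show ?case
  proof (cases "m = 1")
    case True
    have "1 \<le> B ^ card {q. q < K \<and> q dvd m}" using B by (rule one_le_power)
    then show ?thesis using True by (simp add: divisor_count_def)
  next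
    case False
    with less.prems obtain p a r where p: "prime p" and "0 < a" and pr: "\<not> p dvd r"
      and m: "m = p ^ a * r"
      using split_prime_power_factor by (metis less_one nat_neq_iff)
    have "2 \<le> p" using p by (rule prime_ge_2_nat)
    have "0 < r" using m less.prems by (cases r) auto
    have "p \<le> p ^ a" using \<open>2 \<le> p\<close> \<open>0 < a\<close> by (intro self_le_power) auto
    then have "r < m" using m \<open>0 < r\<close> \<open>2 \<le> p\<close> by (simp add: n_less_m_mult_n)
    define e :: nat where "e = (if p < K then 1 else 0)"
    have prime_factor: "real (a + 1) \<le> B ^ e * (real p powr \<delta>) ^ a"
      using small[OF p] large[OF p] by (auto simp: e_def not_less)
    have "r dvd m" "p dvd m" using m \<open>0 < a\<close> by auto
    then have card_S: "card (S r) + e \<le> card (S m)"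
      using card_bounded_divisors_mono[of r m K] card_bounded_divisors_strict_mono[of r m p K] pr
      by (auto simp: S_def e_def Suc_le_eq)
    have "real (divisor_count m) \<le> real (a + 1) * real (divisor_count r)"
      using divisor_count_prime_power_mult_le[OF p \<open>0 < r\<close>, of a] m
      by (metis of_nat_le_iff of_nat_mult)
    also have "\<dots> \<le> (B ^ e * (real p powr \<delta>) ^ a) * (B ^ card (S r) * real r powr \<delta>)"
      using prime_factor less.IH[OF \<open>r < m\<close> \<open>0 < r\<close>] by (intro mult_mono) (auto simp: S_def)
    also have "\<dots> = B ^ (card (S r) + e) * real m powr \<delta>"
      using \<open>2 \<le> p\<close> by (simp add: m power_add powr_mult powr_realpow[symmetric] powr_powr mult_ac)
    also have "\<dots> \<le> B ^ card (S m) * real m powr \<delta>"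
      using card_S B by (intro mult_right_mono power_increasing) auto
    finally show ?thesis by (simp add: S_def)
  qed
qed

theorem divisor_count_le_powr:
  fixes \<delta> :: real
  assumes "\<delta> > 0"
  shows "\<exists>C > 0. \<forall>m > 0. real (divisor_count m) \<le> C * real m powr \<delta>"
proof -
  obtain N :: nat where "1 / \<delta> \<le> N" using real_arch_simple by blast
  then have N: "1 \<le> \<delta> * N" using assms by (simp add: field_simps)
  define B where "B = 1 + 1 / (\<delta> * ln 2)"
  have B: "1 \<le> B" using assms by (simp add: B_def)
  have "real (divisor_count m) \<le> B ^ (2 ^ N) * real m powr \<delta>" if "0 < m" for m
  proof -
    have "real (divisor_count m) \<le> B ^ card {q. q < 2 ^ N \<and> q dvd m} * real m powr \<delta>"
    proof (rule divisor_count_le_powr_small_divisors[OF B _ _ \<open>0 < m\<close>])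
      fix p a :: nat assume "prime p"
      then have "2 \<le> p" by (rule prime_ge_2_nat)
      then show "real (a + 1) \<le> B * (real p powr \<delta>) ^ a"
        unfolding B_def by (rule succ_le_powr_power[OF assms])
      show "real (a + 1) \<le> (real p powr \<delta>) ^ a" if "2 ^ N \<le> p"
        using assms N that by (rule succ_le_powr_power_large)
    qed
    also have "\<dots> \<le> B ^ (2 ^ N) * real m powr \<delta>"
    proof (intro mult_right_mono power_increasing)
      show "card {q. q < 2 ^ N \<and> q dvd m} \<le> 2 ^ N"
        using card_mono[of "{..<2 ^ N}" "{q. q < 2 ^ N \<and> q dvd m}"] by auto
    qed (use B in auto)
    finally show ?thesis .
  qed
  moreover have "0 < B ^ (2 ^ N)" using B by simp
  ultimately show ?thesis by blast
qed

definition solutions :: "nat \<Rightarrow> (nat \<times> nat \<times> nat \<times> nat) set" where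
  "solutions n = {(x, y, z, w). 0 < x \<and> 0 < y \<and> 0 < z \<and> 0 < w \<and> n = x * y * z * w + x + y + z + w}"

lemma R4_eq_card_solutions: "R4 n = card (solutions n)"
  by (simp add: R4_def solutions_def)

lemma finite_solutions: "finite (solutions n)"
proof (rule finite_subset)
  show "solutions n \<subseteq> {..n} \<times> {..n} \<times> {..n} \<times> {..n}"
    by (auto simp: solutions_def)
qed simp

lemma swap_pairs_mem_solutions:
  "(x, y, z, w) \<in> solutions n \<Longrightarrow> (z, w, x, y) \<in> solutions n"
  by (simp add: solutions_def ac_simps)

lemma mult_le_imp_square_le:
  fixes a b n :: nat
  assumes "a * b \<le> n"
  shows "a\<^sup>2 \<le> n \<or> b\<^sup>2 \<le> n"
proof (rule ccontr)
  assume "\<not> (a\<^sup>2 \<le> n \<or> b\<^sup>2 \<le> n)"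
  then have "n < a\<^sup>2" "n < b\<^sup>2" by auto
  moreover from this have "0 < a\<^sup>2" by linarith
  ultimately have "n * n < a\<^sup>2 * b\<^sup>2" by (intro mult_strict_mono) auto
  also have "\<dots> = (a * b)\<^sup>2" by (simp add: power_mult_distrib)
  also have "\<dots> \<le> n * n" using assms by (simp add: power2_eq_square mult_le_mono)
  finally show False by simp
qed

lemma card_solutions_le_twice_balanced:
  "card (solutions n) \<le> 2 * card {(x, y, z, w) \<in> solutions n. (x * y)\<^sup>2 \<le> n}"
proof -
  define Q where "Q = {(x, y, z, w) \<in> solutions n. (x * y)\<^sup>2 \<le> n}"
  define swap where "swap = (\<lambda>(x :: nat, y :: nat, z :: nat, w :: nat). (z, w, x, y))"
  have "solutions n \<subseteq> Q \<union> swap ` Q"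
  proof clarify
    fix x y z w assume s: "(x, y, z, w) \<in> solutions n" and "(x, y, z, w) \<notin> swap ` Q"
    moreover have "(x, y, z, w) = swap (z, w, x, y)" by (simp add: swap_def)
    ultimately have "(z, w, x, y) \<notin> Q" by (metis imageI)
    then have "\<not> (z * w)\<^sup>2 \<le> n" using swap_pairs_mem_solutions[OF s] by (simp add: Q_def)
    moreover have "(x * y) * (z * w) \<le> n" using s by (simp add: solutions_def mult_ac)
    ultimately have "(x * y)\<^sup>2 \<le> n" using mult_le_imp_square_le by blast
    then show "(x, y, z, w) \<in> Q" using s by (simp add: Q_def)
  qed
  moreover have "finite Q"
    unfolding Q_def by (rule finite_subset[OF _ finite_solutions]) auto
  ultimately have "card (solutions n) \<le> card (Q \<union> swap ` Q)" by (intro card_mono) auto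
  also have "\<dots> \<le> card Q + card (swap ` Q)" by (rule card_Un_le)
  also have "\<dots> \<le> 2 * card Q" using card_image_le[OF \<open>finite Q\<close>, of swap] by simp
  finally show ?thesis by (simp add: Q_def)
qed

lemma solution_factorization:
  fixes x y z w n :: nat
  assumes "n = x * y * z * w + x + y + z + w"
  shows "x * y * (n - x - y) + 1 = (x * y * z + 1) * (x * y * w + 1)"
proof -
  have "n - x - y = x * y * z * w + z + w" using assms by simp
  then show ?thesis by (simp add: algebra_simps)
qed

lemma solutions_fixed_xy:
  fixes x y n :: nat
  assumes "0 < x" "0 < y"
  defines "F \<equiv> {(z, w). 0 < z \<and> 0 < w \<and> n = x * y * z * w + x + y + z + w}"
  shows "finite F" and "card F \<le> divisor_count (x * y * (n - x - y) + 1)"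
proof -
  define f where "f = (\<lambda>(z::nat, w::nat). x * y * z + 1)"
  define D where "D = {d. d dvd x * y * (n - x - y) + 1}"
  have "inj_on f F"
  proof (rule inj_onI, clarify)
    fix z w z' w' assume "(z, w) \<in> F" "(z', w') \<in> F" "f (z, w) = f (z', w')"
    moreover from this have "z = z'" using assms by (simp add: f_def)
    ultimately have "(x * y * z + 1) * w = (x * y * z + 1) * w'"
      by (simp add: F_def algebra_simps)
    then have "w = w'" by (subst (asm) mult_cancel_left) simp
    with \<open>z = z'\<close> show "z = z' \<and> w = w'" ..
  qed
  moreover have "f ` F \<subseteq> D"
  proof clarify
    fix z w assume "(z, w) \<in> F"
    then have "x * y * (n - x - y) + 1 = (x * y * z + 1) * (x * y * w + 1)"
      by (intro solution_factorization) (simp add: F_def)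
    then show "f (z, w) \<in> D" unfolding f_def D_def by (metis dvd_triv_left mem_Collect_eq case_prod_conv)
  qed
  moreover have "finite D" by (simp add: D_def)
  ultimately have "finite (f ` F)" and "card (f ` F) \<le> card D"
    by (auto intro: finite_subset card_mono)
  with \<open>inj_on f F\<close> show "finite F" and "card F \<le> divisor_count (x * y * (n - x - y) + 1)"
    by (auto simp: divisor_count_def D_def card_image dest: finite_imageD)
qed

lemma pairs_with_product_in:
  fixes A :: "nat set"
  assumes "finite A" "0 \<notin> A"
  shows "finite {(x, y). x * y \<in> A}" and "card {(x, y). x * y \<in> A} = (\<Sum>k\<in>A. divisor_count k)"
proof -
  have fin: "finite (SIGMA k:A. {d. d dvd k})"
    using assms by (intro finite_SigmaI) (auto intro!: finite_divisors_nat Nat.gr0I)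
  have bij: "bij_betw (\<lambda>(x, y). (x * y, x)) {(x, y). x * y \<in> A} (SIGMA k:A. {d. d dvd k})"
    using assms(2) by (intro bij_betw_byWitness[where f' = "\<lambda>(k, d). (d, k div d)"]) auto
  then show "finite {(x, y). x * y \<in> A}" using fin by (simp add: bij_betw_finite)
  from bij have "card {(x, y). x * y \<in> A} = card (SIGMA k:A. {d. d dvd k})"
    by (rule bij_betw_same_card)
  also have "\<dots> = (\<Sum>k\<in>A. divisor_count k)"
    using assms by (subst card_SigmaI) (auto simp: divisor_count_def intro!: finite_divisors_nat Nat.gr0I)
  finally show "card {(x, y). x * y \<in> A} = (\<Sum>k\<in>A. divisor_count k)" .
qed

definition small_product_pairs :: "nat \<Rightarrow> (nat \<times> nat) set" where
  "small_product_pairs n = {(x, y). x * y \<in> {k. 0 < k \<and> k\<^sup>2 \<le> n}}"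

lemma finite_positive_squares: "finite {k :: nat. 0 < k \<and> k\<^sup>2 \<le> n}"
  by (rule finite_subset[of _ "{..n}"]) (auto intro: power2_nat_le_imp_le)

lemma card_positive_squares_le:
  "real (card {k :: nat. 0 < k \<and> k\<^sup>2 \<le> n}) \<le> sqrt (real n)"
proof -
  have "{k. 0 < k \<and> k\<^sup>2 \<le> n} \<subseteq> {1..nat \<lfloor>sqrt (real n)\<rfloor>}"
  proof clarify
    fix k :: nat assume "0 < k" "k\<^sup>2 \<le> n"
    then have "real k \<le> sqrt (real n)" by (simp add: real_le_rsqrt of_nat_power[symmetric] del: of_nat_power)
    then show "k \<in> {1..nat \<lfloor>sqrt (real n)\<rfloor>}" using \<open>0 < k\<close> by (simp add: le_nat_floor)
  qed
  then have "card {k. 0 < k \<and> k\<^sup>2 \<le> n} \<le> card {1..nat \<lfloor>sqrt (real n)\<rfloor>}"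
    by (rule card_mono[rotated]) simp
  also have "\<dots> = nat \<lfloor>sqrt (real n)\<rfloor>" by simp
  finally have "real (card {k. 0 < k \<and> k\<^sup>2 \<le> n}) \<le> real (nat \<lfloor>sqrt (real n)\<rfloor>)"
    by (rule of_nat_mono)
  also have "\<dots> \<le> sqrt (real n)" by simp
  finally show ?thesis .
qed

lemma card_balanced_solutions_le:
  "card {(x, y, z, w) \<in> solutions n. (x * y)\<^sup>2 \<le> n}
     \<le> (\<Sum>(x, y) \<in> small_product_pairs n. divisor_count (x * y * (n - x - y) + 1))"
proof -
  define P where "P = small_product_pairs n"
  define F where "F = (\<lambda>(x :: nat, y :: nat). {(z, w). 0 < z \<and> 0 < w \<and> n = x * y * z * w + x + y + z + w})"
  have "finite P"
    unfolding P_def small_product_pairs_def using finite_positive_squares by (rule pairs_with_product_in) simp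
  have fiber_finite: "\<forall>p\<in>P. finite (F p)"
    using solutions_fixed_xy(1) by (auto simp: P_def small_product_pairs_def F_def)
  then have "finite (SIGMA p:P. F p)" using \<open>finite P\<close> by blast
  have "{(x, y, z, w) \<in> solutions n. (x * y)\<^sup>2 \<le> n} \<subseteq> (\<lambda>((x, y), (z, w)). (x, y, z, w)) ` (SIGMA p:P. F p)"
  proof clarify
    fix x y z w assume "(x, y, z, w) \<in> solutions n" "(x * y)\<^sup>2 \<le> n"
    then have "((x, y), (z, w)) \<in> (SIGMA p:P. F p)" by (simp add: solutions_def P_def small_product_pairs_def F_def)
    then show "(x, y, z, w) \<in> (\<lambda>((x, y), (z, w)). (x, y, z, w)) ` (SIGMA p:P. F p)"
      by (rule rev_image_eqI) simp
  qed
  then have "card {(x, y, z, w) \<in> solutions n. (x * y)\<^sup>2 \<le> n} \<le> card (SIGMA p:P. F p)"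
    using \<open>finite (SIGMA p:P. F p)\<close> by (meson card_image_le card_mono finite_imageI order_trans)
  also have "\<dots> = (\<Sum>p\<in>P. card (F p))"
    using \<open>finite P\<close> fiber_finite by (rule card_SigmaI)
  also have "\<dots> \<le> (\<Sum>(x, y) \<in> P. divisor_count (x * y * (n - x - y) + 1))"
    using solutions_fixed_xy(2) by (intro sum_mono) (auto simp: P_def small_product_pairs_def F_def)
  finally show ?thesis by (simp add: P_def)
qed

lemma R4_le_twice_divisor_sum:
  "R4 n \<le> 2 * (\<Sum>(x, y) \<in> small_product_pairs n. divisor_count (x * y * (n - x - y) + 1))"
  unfolding R4_eq_card_solutions
  using card_solutions_le_twice_balanced[of n] card_balanced_solutions_le[of n] by linarith

lemma divisor_count_balanced_le:
  fixes C \<eta> :: real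
  assumes C: "\<forall>m > 0. real (divisor_count m) \<le> C * real m powr \<eta>" "0 \<le> C"
    and "0 \<le> \<eta>" "0 < x * y" "(x * y)\<^sup>2 \<le> n"
  shows "real (divisor_count (x * y * (n - x - y) + 1)) \<le> C * 2 powr \<eta> * real n powr (2 * \<eta>)"
proof -
  define M where "M = x * y * (n - x - y) + 1"
  have "x * y \<le> n" using assms(5) by (rule power2_nat_le_imp_le)
  moreover from this have "0 < n" using assms(4) by linarith
  ultimately have "M \<le> n * n + 1" unfolding M_def by (intro add_mono mult_mono) auto
  also have "\<dots> \<le> 2 * n\<^sup>2"
    using \<open>0 < n\<close> by (simp add: power2_eq_square Suc_le_eq)
  finally have "real M \<le> 2 * real n ^ 2" by (metis of_nat_le_iff of_nat_mult of_nat_numeral of_nat_power)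
  then have "real M powr \<eta> \<le> (2 * real n ^ 2) powr \<eta>" using assms(3) by (intro powr_mono2) (auto simp: M_def)
  also have "\<dots> = 2 powr \<eta> * (real n ^ 2) powr \<eta>" by (rule powr_mult)
  also have "(real n ^ 2) powr \<eta> = real n powr (2 * \<eta>)"
    using \<open>0 < n\<close> by (simp flip: powr_powr)
  finally have M_powr: "real M powr \<eta> \<le> 2 powr \<eta> * real n powr (2 * \<eta>)" .
  have "real (divisor_count M) \<le> C * real M powr \<eta>" using C(1) by (simp add: M_def del: of_nat_Suc)
  also have "\<dots> \<le> C * (2 powr \<eta> * real n powr (2 * \<eta>))"
    using M_powr C(2) by (rule mult_left_mono)
  finally show ?thesis by (simp add: M_def mult.assoc)
qed

lemma card_small_product_pairs_le:
  fixes C \<eta> :: real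
  assumes C: "\<forall>m > 0. real (divisor_count m) \<le> C * real m powr \<eta>" "0 \<le> C" and "0 \<le> \<eta>"
  shows "real (card (small_product_pairs n)) \<le> C * sqrt (real n) * real n powr \<eta>"
proof -
  define T where "T = {k :: nat. 0 < k \<and> k\<^sup>2 \<le> n}"
  have "real (card (small_product_pairs n)) = (\<Sum>k\<in>T. real (divisor_count k))"
    unfolding small_product_pairs_def T_def using finite_positive_squares
    by (subst pairs_with_product_in(2)) auto
  also have "\<dots> \<le> (\<Sum>k\<in>T. C * real n powr \<eta>)"
  proof (rule sum_mono)
    fix k assume "k \<in> T"
    then have "0 < k" "k \<le> n" by (auto simp: T_def intro: power2_nat_le_imp_le)
    then have "real k powr \<eta> \<le> real n powr \<eta>" using assms(3) by (intro powr_mono2) auto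
    then show "real (divisor_count k) \<le> C * real n powr \<eta>"
      using C \<open>0 < k\<close> by (meson mult_left_mono order_trans)
  qed
  also have "\<dots> = real (card T) * (C * real n powr \<eta>)" by simp
  also have "\<dots> \<le> sqrt (real n) * (C * real n powr \<eta>)"
    using card_positive_squares_le C(2) by (intro mult_right_mono) (auto simp: T_def)
  finally show ?thesis by (simp add: T_def mult_ac)
qed

lemma divisor_sum_over_small_product_pairs_le:
  fixes C \<eta> :: real
  assumes C: "\<forall>m > 0. real (divisor_count m) \<le> C * real m powr \<eta>" "0 \<le> C" and "0 \<le> \<eta>"
  shows "real (\<Sum>(x, y) \<in> small_product_pairs n. divisor_count (x * y * (n - x - y) + 1))
           \<le> (C * sqrt (real n) * real n powr \<eta>) * (C * 2 powr \<eta> * real n powr (2 * \<eta>))"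
proof -
  define B where "B = C * 2 powr \<eta> * real n powr (2 * \<eta>)"
  have "real (\<Sum>(x, y) \<in> small_product_pairs n. divisor_count (x * y * (n - x - y) + 1))
          = (\<Sum>(x, y) \<in> small_product_pairs n. real (divisor_count (x * y * (n - x - y) + 1)))"
    by (simp add: case_prod_beta)
  also have "\<dots> \<le> (\<Sum>p \<in> small_product_pairs n. B)"
    using divisor_count_balanced_le[OF C assms(3)] by (intro sum_mono) (auto simp: small_product_pairs_def B_def)
  also have "\<dots> = real (card (small_product_pairs n)) * B" by simp
  also have "\<dots> \<le> (C * sqrt (real n) * real n powr \<eta>) * B"
    using card_small_product_pairs_le[OF C assms(3)] C(2)
    by (intro mult_right_mono) (auto simp: B_def)
  finally show ?thesis by (simp add: B_def)
qed

theorem theorem5: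
  fixes \<epsilon> :: real
  assumes "\<epsilon> > 0"
  shows "\<exists>C > 0. \<forall>n :: nat. n > 0 \<longrightarrow> real (R4 n) \<le> C * real n powr (1/2 + \<epsilon>)"
proof -
  define \<eta> where "\<eta> = \<epsilon> / 3"
  have "0 < \<eta>" using assms by (simp add: \<eta>_def)
  then obtain C where "0 < C" and C: "\<forall>m > 0. real (divisor_count m) \<le> C * real m powr \<eta>"
    using divisor_count_le_powr by blast
  define K where "K = 2 * C * C * 2 powr \<eta>"
  have "real (R4 n) \<le> K * real n powr (1/2 + \<epsilon>)" if "0 < n" for n
  proof -
    have "real (R4 n) \<le> 2 * real (\<Sum>(x, y) \<in> small_product_pairs n.
                                       divisor_count (x * y * (n - x - y) + 1))"
      using of_nat_mono[OF R4_le_twice_divisor_sum, where 'a = real] by simp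
    also have "\<dots> \<le> 2 * ((C * sqrt (real n) * real n powr \<eta>) * (C * 2 powr \<eta> * real n powr (2 * \<eta>)))"
      using divisor_sum_over_small_product_pairs_le[OF C, of n] \<open>0 < C\<close> \<open>0 < \<eta>\<close> by linarith
    also have "\<dots> = K * (real n powr (1/2) * real n powr \<eta> * real n powr (2 * \<eta>))"
      by (simp add: K_def powr_half_sqrt mult_ac)
    also have "\<dots> = K * real n powr (1/2 + \<epsilon>)"
      using \<open>0 < n\<close> by (simp add: \<eta>_def add.commute flip: powr_add)
    finally show ?thesis .
  qed
  moreover have "0 < K" using \<open>0 < C\<close> by (simp add: K_def)
  ultimately show ?thesis by blast
qed

end
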